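(* Let $(S,\Delta,\mathbb{P})$ be a probability space, $(U,d)$ a separable metric space, $\mathfrak{X}$ the set of $U$-valued random variables on $S$, $\mathcal{I}$ an ideal on $\mathbb{N}$, $r\geq 0$, and $\{X_n\}_{n\in\mathbb{N}}$ a sequence in $\mathfrak{X}$. Then the set $\mathcal{I}^{\mathbb{P}}\text{-}LIM^rX_i$ is closed in $(\mathfrak{X}^0,\rho)$.
   Context: The Ky Fan metric is $\rho(X,Y)=\inf\{\varepsilon>0:\mathbb{P}(d(X,Y)>\varepsilon)\leq\varepsilon\}$; $\mathfrak{X}^0$ is the set of equivalence classes of $\mathfrak{X}$ under almost sure equality, on which $\rho$ is a metric. An ideal on $\mathbb{N}$ is a family $\mathcal{I}\subseteq\mathcal{P}(\mathbb{N})$ with $\varnothing\in\mathcal{I}$, closed under finite unions and under subsets. A sequence $\{X_n\}$ in $\mathfrak{X}$ is rough $\mathcal{I}$-convergent in probability to $X_*\in\mathfrak{X}$ with degree of roughness $r$ if $\{n\in\mathbb{N}:\mathbb{P}(d(X_n,X_* )>r+\varepsilon)>\delta\}\in\mathcal{I}$ for every $\varepsilon,\delta>0$; $\mathcal{I}^{\mathbb{P}}\text{-}LIM^rX_i$ denotes the set of all such $X_*$. *)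

theory Defs
  imports "HOL-Probability.Probability"
begin

definition ideal_on_nat :: "nat set set \<Rightarrow> bool" where
  "ideal_on_nat I \<longleftrightarrow> {} \<in> I \<and> (\<forall>A\<in>I. \<forall>B\<in>I. A \<union> B \<in> I) \<and> (\<forall>A\<in>I. \<forall>B. B \<subseteq> A \<longrightarrow> B \<in> I)"

definition ky_fan :: "'a measure \<Rightarrow> ('a \<Rightarrow> 'b::metric_space) \<Rightarrow> ('a \<Rightarrow> 'b) \<Rightarrow> real" where
  "ky_fan M X Y = Inf {\<epsilon>. \<epsilon> > 0 \<and> measure M {s \<in> space M. dist (X s) (Y s) > \<epsilon>} \<le> \<epsilon>}"

definition rough_I_LIM_prob ::
  "'a measure \<Rightarrow> nat set set \<Rightarrow> real \<Rightarrow> (nat \<Rightarrow> 'a \<Rightarrow> 'b::metric_space) \<Rightarrow> ('a \<Rightarrow> 'b) set" where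
  "rough_I_LIM_prob M I r X =
     {Z \<in> borel_measurable M. \<forall>\<epsilon>>0. \<forall>\<delta>>0.
        {n. measure M {s \<in> space M. dist (X n s) (Z s) > r + \<epsilon>} > \<delta>} \<in> I}"

end

theory Submission
  imports Defs
begin

text \<open>If \<open>Z\<close> is a rough \<open>\<I>\<close>-limit and \<open>\<rho>(Z, Y) < \<eta>\<close>, then outside an event of probability
  at most \<open>\<eta>\<close> the points \<open>Z\<close> and \<open>Y\<close> are \<open>\<eta>\<close>-close, so by the triangle inequality every index
  at which \<open>X\<^sub>n\<close> is \<open>(r + \<epsilon>)\<close>-far from \<open>Y\<close> with probability above \<open>\<delta>\<close> is an index at which
  \<open>X\<^sub>n\<close> is \<open>(r + \<epsilon> - \<eta>)\<close>-far from \<open>Z\<close> with probability above \<open>\<delta> - \<eta>\<close>. For \<open>\<eta> < min \<epsilon> \<delta>\<close>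
  these indices form a set in \<open>\<I>\<close>, and ideals are closed under subsets.\<close>

lemma ideal_on_nat_subset:
  assumes "ideal_on_nat I" "A \<in> I" "B \<subseteq> A"
  shows "B \<in> I"
  using assms unfolding ideal_on_nat_def by blast

lemma (in finite_measure) measure_dist_gt_add_le:
  fixes X Y Z :: "'a \<Rightarrow> 'b::{metric_space, second_countable_topology}"
  assumes [measurable]: "X \<in> borel_measurable M" "Y \<in> borel_measurable M" "Z \<in> borel_measurable M"
  shows "measure M {s \<in> space M. dist (X s) (Z s) > a + b}
    \<le> measure M {s \<in> space M. dist (X s) (Y s) > a} + measure M {s \<in> space M. dist (Y s) (Z s) > b}"
proof -
  let ?A = "{s \<in> space M. dist (X s) (Y s) > a}"
  let ?B = "{s \<in> space M. dist (Y s) (Z s) > b}"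
  have "{s \<in> space M. dist (X s) (Z s) > a + b} \<subseteq> ?A \<union> ?B"
  proof clarify
    fix s assume "s \<in> space M" "dist (X s) (Z s) > a + b" "\<not> dist (Y s) (Z s) > b"
    then show "dist (X s) (Y s) > a"
      using dist_triangle[of "X s" "Z s" "Y s"] by linarith
  qed
  then have "measure M {s \<in> space M. dist (X s) (Z s) > a + b} \<le> measure M (?A \<union> ?B)"
    by (intro finite_measure_mono) measurable
  also have "\<dots> \<le> measure M ?A + measure M ?B"
    by (intro measure_subadditive) measurable
  finally show ?thesis .
qed

lemma (in finite_measure) measure_dist_gt_less_if_ky_fan_less:
  fixes Z Y :: "'a \<Rightarrow> 'b::{metric_space, second_countable_topology}"
  assumes [measurable]: "Z \<in> borel_measurable M" "Y \<in> borel_measurable M"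
    and "ky_fan M Z Y < \<eta>"
  shows "measure M {s \<in> space M. dist (Z s) (Y s) > \<eta>} < \<eta>"
proof -
  let ?S = "{e. e > 0 \<and> measure M {s \<in> space M. dist (Z s) (Y s) > e} \<le> e}"
  have "max 1 (measure M (space M)) \<in> ?S"
    by (auto intro: bounded_measure max.coboundedI2)
  then obtain e where e: "e \<in> ?S" "e < \<eta>"
    using cInf_lessD[of ?S \<eta>] \<open>ky_fan M Z Y < \<eta>\<close> unfolding ky_fan_def by blast
  have "measure M {s \<in> space M. dist (Z s) (Y s) > \<eta>} \<le> measure M {s \<in> space M. dist (Z s) (Y s) > e}"
    using \<open>e < \<eta>\<close> by (intro finite_measure_mono) auto
  also have "\<dots> \<le> e" using e by simp
  finally show ?thesis using \<open>e < \<eta>\<close> by simp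
qed

lemma (in finite_measure) rough_deviation_indices_subset:
  fixes X :: "nat \<Rightarrow> 'a \<Rightarrow> 'b::{metric_space, second_countable_topology}"
  assumes [measurable]: "\<And>n. X n \<in> borel_measurable M" "Z \<in> borel_measurable M" "Y \<in> borel_measurable M"
    and "ky_fan M Z Y < \<eta>"
  shows "{n. measure M {s \<in> space M. dist (X n s) (Y s) > r + \<epsilon>} > \<delta>}
    \<subseteq> {n. measure M {s \<in> space M. dist (X n s) (Z s) > r + (\<epsilon> - \<eta>)} > \<delta> - \<eta>}"
proof safe
  fix n
  assume "measure M {s \<in> space M. dist (X n s) (Y s) > r + \<epsilon>} > \<delta>"
  moreover have "measure M {s \<in> space M. dist (X n s) (Y s) > (r + (\<epsilon> - \<eta>)) + \<eta>}
    \<le> measure M {s \<in> space M. dist (X n s) (Z s) > r + (\<epsilon> - \<eta>)}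
      + measure M {s \<in> space M. dist (Z s) (Y s) > \<eta>}"
    by (rule measure_dist_gt_add_le) measurable
  moreover have "measure M {s \<in> space M. dist (Z s) (Y s) > \<eta>} < \<eta>"
    by (rule measure_dist_gt_less_if_ky_fan_less[OF _ _ \<open>ky_fan M Z Y < \<eta>\<close>]) measurable
  ultimately show "measure M {s \<in> space M. dist (X n s) (Z s) > r + (\<epsilon> - \<eta>)} > \<delta> - \<eta>"
    by simp
qed

theorem theorem2p2:
  fixes M :: "'a measure" and I :: "nat set set" and r :: real
    and X :: "nat \<Rightarrow> 'a \<Rightarrow> 'b::{metric_space, second_countable_topology}"
    and Y :: "'a \<Rightarrow> 'b"
  assumes "prob_space M"
    and "ideal_on_nat I"
    and "r \<ge> 0"
    and "\<And>n. X n \<in> borel_measurable M"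
    and "Y \<in> borel_measurable M"
    and "\<And>\<epsilon>. \<epsilon> > 0 \<Longrightarrow> \<exists>Z \<in> rough_I_LIM_prob M I r X. ky_fan M Z Y < \<epsilon>"
  shows "Y \<in> rough_I_LIM_prob M I r X"
proof -
  interpret prob_space M by fact
  have "{n. measure M {s \<in> space M. dist (X n s) (Y s) > r + \<epsilon>} > \<delta>} \<in> I"
    if "\<epsilon> > 0" "\<delta> > 0" for \<epsilon> \<delta>
  proof -
    define \<eta> where "\<eta> = min \<epsilon> \<delta> / 2"
    have "\<eta> > 0"
      using that by (simp add: \<eta>_def)
    then obtain Z where Z: "Z \<in> rough_I_LIM_prob M I r X" and "ky_fan M Z Y < \<eta>"
      using assms(6) by blast
    have "{n. measure M {s \<in> space M. dist (X n s) (Z s) > r + (\<epsilon> - \<eta>)} > \<delta> - \<eta>} \<in> I"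
      using Z that by (simp add: rough_I_LIM_prob_def \<eta>_def)
    moreover have "{n. measure M {s \<in> space M. dist (X n s) (Y s) > r + \<epsilon>} > \<delta>}
      \<subseteq> {n. measure M {s \<in> space M. dist (X n s) (Z s) > r + (\<epsilon> - \<eta>)} > \<delta> - \<eta>}"
      using Z assms(4,5) \<open>ky_fan M Z Y < \<eta>\<close>
      by (intro rough_deviation_indices_subset) (auto simp: rough_I_LIM_prob_def)
    ultimately show ?thesis
      using ideal_on_nat_subset[OF assms(2)] by blast
  qed
  then show ?thesis
    using assms(5) by (simp add: rough_I_LIM_prob_def)
qed

end
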